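(* Let $\theta>0$. Let $\mathcal{C}(t)=(C_1(t),C_2(t),\dots)$, $t\ge0$, be the family size counts of the Yule process with immigration (immigration rate $\theta$, birth rate $1$), where $C_j(t)$ is the number of families of size $j$ at time $t$, and let $Z(t)$ be the total population size at time $t$. Let $\tilde{\mathcal{C}}(n)=(\tilde C_1(n),\tilde C_2(n),\dots)$, $n\in\mathbb{Z}_+$, be the family size counts generated by the first $n$ arrivals of the Chinese Restaurant Process with parameter $\theta$. Then for any $p\in\mathbb{N}$, $0<t_1<\dots<t_p$, integers $0\le l_1\le l_2\le\dots\le l_p$, and $u_1,\dots,u_p\in\mathbb{Z}_+^{\mathbb{N}}$, $$\mathbb{P}(\mathcal{C}(t_1)=u_1,\dots,\mathcal{C}(t_p)=u_p\mid Z(t_1)=l_1,\dots,Z(t_p)=l_p)=\mathbb{P}(\tilde{\mathcal{C}}(l_1)=u_1,\dots,\tilde{\mathcal{C}}(l_p)=u_p).$$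
   Context: Yule process with immigration: at time $0$ the population is empty; immigrants arrive at the points of a homogeneous Poisson process of rate $\theta$ on $[0,\infty)$, and each immigrant founds a new family; every individual, independently of everything else, gives birth to a new member of its own family at rate $1$ (no deaths). Chinese Restaurant Process with parameter $\theta$: individuals arrive one at a time; the first founds a new family; given that $n\ge1$ individuals have arrived, the $(n+1)$-st founds a new family with probability $\theta/(\theta+n)$ and otherwise joins an existing family of current size $j$ with probability $j/(\theta+n)$ (for each such family). $\tilde C_j(n)$ is the number of families of size $j$ among the first $n$ arrivals ($\tilde{\mathcal{C}}(0)$ is the zero sequence). *)

theory Defs
  imports "HOL-Probability.Probability"
begin

text \<open>A configuration of family-size counts: c j = number of families of size j
  (index 0 is unused and kept equal to 0).\<close>
type_synonym counts = "nat \<Rightarrow> nat"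

definition count_states :: "counts set" where
  "count_states = {c. c 0 = 0 \<and> finite {j. c j \<noteq> 0}}"

definition popsize :: "counts \<Rightarrow> nat" where
  "popsize c = (\<Sum>j\<in>{j. c j \<noteq> 0}. j * c j)"

definition immig :: "counts \<Rightarrow> counts" where
  "immig c = c(1 := Suc (c 1))"

definition birth :: "nat \<Rightarrow> counts \<Rightarrow> counts" where
  "birth j c = (c(j := c j - 1))(Suc j := Suc (c (Suc j)))"

text \<open>Off-diagonal jump rates: immigration at rate theta; each individual gives
  birth at rate 1, so families of size j grow at total rate j * c j.\<close>
definition yim_rate :: "real \<Rightarrow> counts \<Rightarrow> counts \<Rightarrow> real" where
  "yim_rate \<theta> x y =
     (if y = immig x then \<theta> else 0)
     + (\<Sum>j\<in>{j. 1 \<le> j \<and> x j \<noteq> 0}. if y = birth j x then real (j * x j) else 0)"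

definition yim_exit :: "real \<Rightarrow> counts \<Rightarrow> real" where
  "yim_exit \<theta> x = \<theta> + real (popsize x)"

text \<open>p is the transition function: solution of the Kolmogorov forward equations.\<close>
definition yim_transition :: "real \<Rightarrow> (real \<Rightarrow> counts \<Rightarrow> counts \<Rightarrow> real) \<Rightarrow> bool" where
  "yim_transition \<theta> p \<longleftrightarrow>
     (\<forall>x\<in>count_states. \<forall>y\<in>count_states.
        p 0 x y = (if x = y then 1 else 0) \<and>
        (\<forall>t\<ge>0. ((\<lambda>s. p s x y) has_real_derivative
            ((\<Sum>\<^sub>\<infinity>z\<in>count_states - {y}. p t x z * yim_rate \<theta> z y) - yim_exit \<theta> y * p t x y))
          (at t within {0..})))"

text \<open>C is (a version of) the family-size-count process of the Yule process with
  immigration started from the empty population: its finite-dimensional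
  distributions are those of the Markov chain with the above rates.\<close>
definition yule_immigration ::
  "'a measure \<Rightarrow> real \<Rightarrow> (real \<Rightarrow> 'a \<Rightarrow> counts) \<Rightarrow> bool" where
  "yule_immigration M \<theta> C \<longleftrightarrow>
     prob_space M \<and>
     (\<forall>t\<ge>0. C t \<in> measurable M (count_space UNIV)) \<and>
     (\<forall>t\<ge>0. \<forall>\<omega>\<in>space M. C t \<omega> \<in> count_states) \<and>
     (AE \<omega> in M. C 0 \<omega> = (\<lambda>_. 0)) \<and>
     (\<exists>p. yim_transition \<theta> p \<and>
        (\<forall>ts xs. length ts = length xs \<longrightarrow> sorted_wrt (<) (0 # ts) \<longrightarrow>
           set xs \<subseteq> count_states \<longrightarrow>
           measure M {\<omega>\<in>space M. \<forall>i<length ts. C (ts ! i) \<omega> = xs ! i}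
             = (\<Prod>i<length ts. p (ts ! i - (0 # ts) ! i) (((\<lambda>_. 0) # xs) ! i) (xs ! i))))"

text \<open>Multiset of the family sizes of the individuals: size j appears j * c j times,
  so picking an individual uniformly picks a family of size j w.p. j c_j / n.\<close>
definition indiv_sizes :: "counts \<Rightarrow> nat multiset" where
  "indiv_sizes c = (\<Sum>j\<in>{j. c j \<noteq> 0}. replicate_mset (j * c j) j)"

definition crp_step :: "real \<Rightarrow> counts \<Rightarrow> counts pmf" where
  "crp_step \<theta> c =
     (if popsize c = 0 then return_pmf (immig c)
      else bind_pmf (bernoulli_pmf (\<theta> / (\<theta> + real (popsize c))))
        (\<lambda>b. if b then return_pmf (immig c)
             else map_pmf (\<lambda>j. birth j c) (pmf_of_multiset (indiv_sizes c))))"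

primrec crp_path :: "real \<Rightarrow> nat \<Rightarrow> counts list pmf" where
  "crp_path \<theta> 0 = return_pmf [(\<lambda>_. 0)]"
| "crp_path \<theta> (Suc n) =
     bind_pmf (crp_path \<theta> n) (\<lambda>xs. map_pmf (\<lambda>y. xs @ [y]) (crp_step \<theta> (last xs)))"

definition cond_prob :: "'a measure \<Rightarrow> 'a set \<Rightarrow> 'a set \<Rightarrow> real" where
  "cond_prob M A B = measure M (A \<inter> B) / measure M B"

end

theory Submission
  imports Defs
begin

(*
  p_t(x, y) = P(CRP started in x is in y after |y| - |x| steps) * P(Z_t = |y| | Z_0 = |x|),

  where Z is the pure birth process with rate theta + n in state n, solves the Kolmogorov
  forward equations, because the jump rate from z to y is theta + |z| times the probability
  of the CRP step from z to y. Every jump raises the population by one, so by induction on |y|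
  the forward equations have no other solution and p is the transition function. Hence the
  probability that the counts pass through given configurations at times t_1 < ... < t_p is
  a CRP path probability times a population path probability; summing over configurations
  of the prescribed sizes shows that the population factor is the probability of the
  conditioning event, and it cancels.
*)

lemma last_eq_nth_if_length: "length xs = Suc n \<Longrightarrow> last xs = xs ! n"
  by (cases xs rule: rev_cases) auto

lemma nth_append_tl_eq_last:
  assumes "length xs = Suc m" "length ys = Suc k" "ys ! 0 = last xs"
  shows "(xs @ tl ys) ! (m + k) = last ys"
  using assms by (cases k; cases ys) (auto simp: nth_append last_eq_nth_if_length)

lemma lift_Suc_mono_le_atMost:
  fixes f :: "nat \<Rightarrow> 'a::order"
  assumes "\<forall>i<p. f i \<le> f (Suc i)" "i \<le> j" "j \<le> p"
  shows "f i \<le> f j"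
  by (rule lift_Suc_mono_le_ivl[of "{..<p}" f]) (use assms in auto)

lemma lift_Suc_mono_less_atMost:
  fixes f :: "nat \<Rightarrow> 'a::order"
  assumes "\<forall>i<p. f i < f (Suc i)" "i < j" "j \<le> p"
  shows "f i < f j"
  by (rule lift_Suc_mono_less_ivl[of "{..<p}" f]) (use assms in auto)

lemma restrict_eq_iff:
  "g \<in> extensional A \<Longrightarrow> restrict f A = g \<longleftrightarrow> (\<forall>x\<in>A. f x = g x)"
  by (auto simp: extensional_def fun_eq_iff)

lemma measure_pmf_prob_bind:
  "measure_pmf.prob (bind_pmf N f) A = (\<integral>x. measure_pmf.prob (f x) A \<partial>measure_pmf N)"
  unfolding measure_pmf_bind
  by (rule measure_pmf.measure_bind[where N="count_space UNIV"])
    (auto simp: space_subprob_algebra measure_pmf_in_subprob_algebra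
      intro: prob_space_imp_subprob_space measure_pmf.prob_space_axioms)

lemma (in finite_measure) measure_preimage_eq_sum:
  assumes "finite S" "\<And>w. w \<in> S \<Longrightarrow> {x\<in>space M. f x = w} \<in> sets M"
  shows "measure M {x\<in>space M. f x \<in> S} = (\<Sum>w\<in>S. measure M {x\<in>space M. f x = w})"
proof -
  have "{x\<in>space M. f x \<in> S} = (\<Union>w\<in>S. {x\<in>space M. f x = w})"
    by auto
  then show ?thesis
    using assms by (auto intro!: finite_measure_finite_Union simp: disjoint_family_on_def)
qed

section \<open>Configurations, jump rates and the CRP step\<close>

definition level :: "nat \<Rightarrow> counts set" where
  "level n = {c \<in> count_states. popsize c = n}"

lemma popsize_eq_sum:
  assumes "finite F" "{j. c j \<noteq> 0} \<subseteq> F"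
  shows "popsize c = (\<Sum>j\<in>F. j * c j)"
  unfolding popsize_def by (rule sum.mono_neutral_left) (use assms in auto)

lemma immig_in_count_states: "c \<in> count_states \<Longrightarrow> immig c \<in> count_states"
  unfolding count_states_def immig_def
  by (auto intro: finite_subset[of _ "insert 1 {j. c j \<noteq> 0}"])

lemma birth_in_count_states: "c \<in> count_states \<Longrightarrow> 0 < j \<Longrightarrow> birth j c \<in> count_states"
  unfolding count_states_def birth_def
  by (auto intro: finite_subset[of _ "insert (Suc j) {i. c i \<noteq> 0}"])

lemma popsize_immig:
  assumes "c \<in> count_states"
  shows "popsize (immig c) = Suc (popsize c)"
proof -
  define F where "F = insert 1 {j. c j \<noteq> 0}"
  have F: "finite F" "1 \<in> F"
    using assms by (auto simp: F_def count_states_def)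
  have popsize_c: "popsize c = (\<Sum>j\<in>F. j * c j)"
    by (rule popsize_eq_sum[OF F(1)]) (auto simp: F_def)
  have "popsize (immig c) = (\<Sum>j\<in>F. j * immig c j)"
    by (rule popsize_eq_sum[OF F(1)]) (auto simp: F_def immig_def)
  also have "\<dots> = (\<Sum>j\<in>F. j * c j + (if j = 1 then 1 else 0))"
    by (rule sum.cong) (auto simp: immig_def)
  also have "\<dots> = popsize c + 1"
    using F popsize_c by (simp add: sum.distrib)
  finally show ?thesis
    by simp
qed

lemma popsize_birth:
  assumes "c \<in> count_states" "c j \<noteq> 0"
  shows "popsize (birth j c) = Suc (popsize c)"
proof -
  define F where "F = insert (Suc j) {i. c i \<noteq> 0}"
  have F: "finite F" "j \<in> F" "Suc j \<in> F"
    using assms by (auto simp: F_def count_states_def)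
  have popsize_c: "popsize c = (\<Sum>i\<in>F. i * c i)"
    by (rule popsize_eq_sum[OF F(1)]) (auto simp: F_def)
  have "popsize (birth j c) = (\<Sum>i\<in>F. i * birth j c i)"
    by (rule popsize_eq_sum[OF F(1)]) (auto simp: F_def birth_def)
  then have "popsize (birth j c) + j = (\<Sum>i\<in>F. i * birth j c i + (if i = j then j else 0))"
    using F by (simp add: sum.distrib)
  also have "\<dots> = (\<Sum>i\<in>F. i * c i + (if i = Suc j then Suc j else 0))"
    using assms(2) by (intro sum.cong) (auto simp: birth_def diff_mult_distrib2)
  also have "\<dots> = popsize c + Suc j"
    using F popsize_c by (simp add: sum.distrib)
  finally show ?thesis
    by simp
qed

lemma mult_le_popsize: "c \<in> count_states \<Longrightarrow> j * c j \<le> popsize c"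
  unfolding popsize_def
  by (cases "c j = 0") (auto intro!: member_le_sum simp: count_states_def)

lemma popsize_eq_0_iff:
  assumes "c \<in> count_states"
  shows "popsize c = 0 \<longleftrightarrow> c = (\<lambda>_. 0)"
proof
  assume "popsize c = 0"
  show "c = (\<lambda>_. 0)"
  proof
    fix j
    show "c j = 0"
      using assms mult_le_popsize[OF assms, of j] \<open>popsize c = 0\<close>
      by (cases j) (auto simp: count_states_def)
  qed
qed (simp add: popsize_def)

lemma level_0: "level 0 = {\<lambda>_. 0}"
  by (auto simp: level_def popsize_eq_0_iff) (auto simp: count_states_def popsize_def)

lemma finite_level: "finite (level n)"
proof -
  have bounded: "z j \<le> n \<and> (n < j \<longrightarrow> z j = 0)" if "z \<in> level n" for z j
  proof -
    have "j * z j \<le> n" "z 0 = 0"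
      using that mult_le_popsize[of z j] by (auto simp: level_def count_states_def)
    show ?thesis
    proof (cases "j = 0")
      case False
      have "z j \<le> j * z j"
        using False mult_le_mono1[of 1 j "z j"] by simp
      moreover have "j \<le> j * z j" if "z j \<noteq> 0"
        using that mult_le_mono2[of 1 "z j" j] by simp
      ultimately show ?thesis
        using \<open>j * z j \<le> n\<close> by (meson le_trans leD)
    qed (simp add: \<open>z 0 = 0\<close>)
  qed
  have "inj_on (\<lambda>z. restrict z {..n}) (level n)"
  proof (rule inj_onI, rule ext)
    fix x y j
    assume x: "x \<in> level n" and y: "y \<in> level n" and eq: "restrict x {..n} = restrict y {..n}"
    show "x j = y j"
      using bounded[OF x, of j] bounded[OF y, of j] fun_cong[OF eq, of j] by (cases "j \<le> n") auto
  qed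
  moreover have "(\<lambda>z. restrict z {..n}) ` level n \<subseteq> (\<Pi>\<^sub>E j\<in>{..n}. {..n})"
    using bounded by (intro image_subsetI) (simp add: Pi_iff)
  ultimately show ?thesis
    by (meson finite_PiE finite_atMost finite_imageD finite_subset)
qed

lemma count_indiv_sizes: "c \<in> count_states \<Longrightarrow> count (indiv_sizes c) j = j * c j"
  by (auto simp: indiv_sizes_def count_sum count_states_def sum.delta)

lemma size_indiv_sizes: "size (indiv_sizes c) = popsize c"
  by (simp add: indiv_sizes_def popsize_def)

lemma set_mset_indiv_sizes:
  "c \<in> count_states \<Longrightarrow> set_mset (indiv_sizes c) = {j. 1 \<le> j \<and> c j \<noteq> 0}"
  by (auto simp: count_indiv_sizes simp flip: count_greater_zero_iff)

lemma yim_rate_nonzero_cases: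
  assumes "yim_rate \<theta> z y \<noteq> 0"
  shows "y = immig z \<or> (\<exists>j. 1 \<le> j \<and> z j \<noteq> 0 \<and> y = birth j z)"
proof (rule ccontr)
  assume "\<not> ?thesis"
  then have "(\<Sum>j\<in>{j. 1 \<le> j \<and> z j \<noteq> 0}. if y = birth j z then real (j * z j) else 0) = 0"
    by (intro sum.neutral) auto
  with \<open>\<not> ?thesis\<close> assms show False
    by (simp add: yim_rate_def)
qed

lemma popsize_yim_rate_nonzero:
  assumes "z \<in> count_states" "yim_rate \<theta> z y \<noteq> 0"
  shows "popsize y = Suc (popsize z)"
  using yim_rate_nonzero_cases[OF assms(2)] popsize_immig[OF assms(1)] popsize_birth[OF assms(1)]
  by auto

lemma set_pmf_crp_step:
  assumes "z \<in> count_states"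
  shows "set_pmf (crp_step \<theta> z) \<subseteq> level (Suc (popsize z))"
proof -
  have "indiv_sizes z \<noteq> {#}" if "popsize z \<noteq> 0"
    using that size_indiv_sizes[of z] by auto
  then have "set_pmf (crp_step \<theta> z) \<subseteq> insert (immig z) ((\<lambda>j. birth j z) ` {j. 1 \<le> j \<and> z j \<noteq> 0})"
    by (auto simp: crp_step_def set_mset_indiv_sizes[OF assms] split: if_splits)
  then show ?thesis
    using assms by (auto simp: level_def immig_in_count_states popsize_immig
        birth_in_count_states popsize_birth)
qed

lemma pmf_crp_step_birth:
  assumes "z \<in> count_states" "popsize z \<noteq> 0"
  shows "pmf (map_pmf (\<lambda>j. birth j z) (pmf_of_multiset (indiv_sizes z))) y
       = (\<Sum>j\<in>{j. 1 \<le> j \<and> z j \<noteq> 0}. if y = birth j z then real (j * z j) else 0) / popsize z"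
proof -
  define J where "J = {j. 1 \<le> j \<and> z j \<noteq> 0}"
  have J: "finite J" "set_mset (indiv_sizes z) = J"
    using assms(1) by (auto simp: J_def count_states_def set_mset_indiv_sizes intro: finite_subset)
  have "indiv_sizes z \<noteq> {#}"
    using assms(2) size_indiv_sizes[of z] by auto
  then have "pmf (map_pmf (\<lambda>j. birth j z) (pmf_of_multiset (indiv_sizes z))) y
      = (\<Sum>j\<in>J. indicator {y} (birth j z) * pmf (pmf_of_multiset (indiv_sizes z)) j)"
    unfolding map_pmf_def pmf_bind pmf_return by (intro integral_measure_pmf_real) (auto simp: J)
  also have "\<dots> = (\<Sum>j\<in>J. indicator {y} (birth j z) * (real (j * z j) / popsize z))"
    using \<open>indiv_sizes z \<noteq> {#}\<close> by (simp add: count_indiv_sizes[OF assms(1)] size_indiv_sizes)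
  finally show ?thesis
    unfolding J_def sum_divide_distrib by (auto intro: sum.cong)
qed

lemma pmf_crp_step:
  assumes "0 \<le> \<theta>" "z \<in> count_states"
  shows "(\<theta> + real (popsize z)) * pmf (crp_step \<theta> z) y = yim_rate \<theta> z y"
proof (cases "popsize z = 0")
  case True
  then show ?thesis
    using popsize_eq_0_iff[OF assms(2)] by (simp add: crp_step_def yim_rate_def indicator_def)
next
  case False
  define n where "n = real (popsize z)"
  define births where
    "births = (\<Sum>j\<in>{j. 1 \<le> j \<and> z j \<noteq> 0}. if y = birth j z then real (j * z j) else 0)"
  have n: "0 < n" "0 < \<theta> + n"
    using False assms(1) by (simp_all add: n_def)
  have "pmf (crp_step \<theta> z) y
      = \<theta> / (\<theta> + n) * indicator {y} (immig z) + (1 - \<theta> / (\<theta> + n)) * (births / n)"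
    using False assms(1) n pmf_crp_step_birth[OF assms(2) False, of y]
    by (simp add: crp_step_def pmf_bind n_def births_def algebra_simps)
  moreover have "yim_rate \<theta> z y = \<theta> * indicator {y} (immig z) + births"
    by (simp add: yim_rate_def births_def indicator_def)
  moreover have "(\<theta> + n) * (\<theta> / (\<theta> + n)) = \<theta>" "(\<theta> + n) * (1 - \<theta> / (\<theta> + n)) = n"
    using n by (simp_all add: field_simps)
  ultimately show ?thesis
    using n by (simp add: distrib_left n_def flip: mult.assoc)
qed

section \<open>The Chinese restaurant process from an arbitrary configuration\<close>

primrec crp_walk :: "real \<Rightarrow> counts \<Rightarrow> nat \<Rightarrow> counts list pmf" where
  "crp_walk \<theta> x 0 = return_pmf [x]"
| "crp_walk \<theta> x (Suc n) =
     bind_pmf (crp_walk \<theta> x n) (\<lambda>xs. map_pmf (\<lambda>y. xs @ [y]) (crp_step \<theta> (last xs)))"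

lemma crp_path_eq_crp_walk: "crp_path \<theta> n = crp_walk \<theta> (\<lambda>_. 0) n"
  by (induction n) simp_all

definition crp_kernel :: "real \<Rightarrow> counts \<Rightarrow> nat \<Rightarrow> counts pmf" where
  "crp_kernel \<theta> x k = map_pmf last (crp_walk \<theta> x k)"

lemma crp_kernel_0: "crp_kernel \<theta> x 0 = return_pmf x"
  by (simp add: crp_kernel_def)

lemma crp_kernel_Suc: "crp_kernel \<theta> x (Suc k) = bind_pmf (crp_kernel \<theta> x k) (crp_step \<theta>)"
  by (simp add: crp_kernel_def map_bind_pmf map_pmf_comp bind_map_pmf)

lemma set_pmf_crp_walk:
  assumes "xs \<in> set_pmf (crp_walk \<theta> x n)"
  shows "length xs = Suc n" "xs ! 0 = x"
  using assms by (induction n arbitrary: xs) (auto simp: nth_append)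

lemma crp_walk_in_level:
  assumes "x \<in> count_states" "xs \<in> set_pmf (crp_walk \<theta> x n)" "k \<le> n"
  shows "xs ! k \<in> level (popsize x + k)"
  using assms(2,3)
proof (induction n arbitrary: xs k)
  case 0
  then show ?case
    using assms(1) by (simp add: level_def)
next
  case (Suc n)
  then obtain ys y where ys: "ys \<in> set_pmf (crp_walk \<theta> x n)" and xs: "xs = ys @ [y]"
    and y: "y \<in> set_pmf (crp_step \<theta> (last ys))"
    by auto
  have len: "length ys = Suc n"
    using set_pmf_crp_walk(1)[OF ys] .
  show ?case
  proof (cases "k \<le> n")
    case True
    then show ?thesis
      using Suc.IH[OF ys True] len by (simp add: xs nth_append)
  next
    case False
    have "last ys \<in> level (popsize x + n)"
      using Suc.IH[OF ys order.refl] last_eq_nth_if_length[OF len] by simp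
    then show ?thesis
      using set_pmf_crp_step[of "last ys" \<theta>] y False Suc.prems(2) len
      by (auto simp: xs nth_append level_def)
  qed
qed

lemma crp_path_in_level:
  assumes "xs \<in> set_pmf (crp_path \<theta> n)" "k \<le> n"
  shows "xs ! k \<in> level k"
proof -
  have "(\<lambda>_. 0) \<in> level 0"
    by (simp add: level_0)
  then show ?thesis
    using crp_walk_in_level[of "\<lambda>_. 0" xs \<theta> n k] assms
    by (simp add: crp_path_eq_crp_walk level_def)
qed

lemma set_pmf_crp_kernel:
  assumes "x \<in> count_states"
  shows "set_pmf (crp_kernel \<theta> x k) \<subseteq> level (popsize x + k)"
proof
  fix z assume "z \<in> set_pmf (crp_kernel \<theta> x k)"
  then obtain xs where xs: "xs \<in> set_pmf (crp_walk \<theta> x k)" "z = last xs"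
    by (auto simp: crp_kernel_def)
  then show "z \<in> level (popsize x + k)"
    using crp_walk_in_level[OF assms xs(1) order.refl]
      last_eq_nth_if_length[OF set_pmf_crp_walk(1)[OF xs(1)]] by simp
qed

lemma crp_walk_add:
  "crp_walk \<theta> x (m + k) =
     bind_pmf (crp_walk \<theta> x m) (\<lambda>xs. map_pmf (\<lambda>ys. xs @ tl ys) (crp_walk \<theta> (last xs) k))"
proof (induction k)
  case 0
  then show ?case by (simp add: bind_return_pmf')
next
  case (Suc k)
  have "crp_walk \<theta> x (m + Suc k) = bind_pmf (crp_walk \<theta> x m) (\<lambda>xs.
      bind_pmf (crp_walk \<theta> (last xs) k) (\<lambda>ys.
        map_pmf (\<lambda>y. (xs @ tl ys) @ [y]) (crp_step \<theta> (last (xs @ tl ys)))))"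
    by (simp add: Suc.IH bind_assoc_pmf bind_map_pmf)
  also have "\<dots> = bind_pmf (crp_walk \<theta> x m) (\<lambda>xs.
      bind_pmf (crp_walk \<theta> (last xs) k) (\<lambda>ys.
        map_pmf (\<lambda>y. xs @ tl (ys @ [y])) (crp_step \<theta> (last ys))))"
  proof (intro bind_pmf_cong refl)
    fix xs ys
    assume "xs \<in> set_pmf (crp_walk \<theta> x m)" "ys \<in> set_pmf (crp_walk \<theta> (last xs) k)"
    then have "xs \<noteq> []" "ys \<noteq> []" "ys ! 0 = last xs"
      using set_pmf_crp_walk by fastforce+
    then show "map_pmf (\<lambda>y. (xs @ tl ys) @ [y]) (crp_step \<theta> (last (xs @ tl ys))) =
        map_pmf (\<lambda>y. xs @ tl (ys @ [y])) (crp_step \<theta> (last ys))"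
      by (cases ys) auto
  qed
  also have "\<dots> = bind_pmf (crp_walk \<theta> x m) (\<lambda>xs.
      map_pmf (\<lambda>ys. xs @ tl ys) (crp_walk \<theta> (last xs) (Suc k)))"
    by (simp add: map_bind_pmf map_pmf_comp)
  finally show ?case .
qed

lemma nth_append_tl_visits_iff:
  fixes l :: "nat \<Rightarrow> nat"
  assumes "\<forall>i<Suc p. l i \<le> l (Suc i)"
    and "length xs = Suc (l p)" "length ys = Suc (l (Suc p) - l p)" "ys ! 0 = last xs"
  shows "(\<forall>i\<in>{1..Suc p}. (xs @ tl ys) ! l i = w i)
     \<longleftrightarrow> (\<forall>i\<in>{1..p}. xs ! l i = w i) \<and> last ys = w (Suc p)"
proof -
  have "(xs @ tl ys) ! l (Suc p) = last ys"
    using nth_append_tl_eq_last[OF assms(2-4)] assms(1) by simp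
  moreover have "(xs @ tl ys) ! l i = xs ! l i" if "i \<le> p" for i
    using lift_Suc_mono_le_atMost[OF assms(1) that] assms(2) by (simp add: nth_append)
  ultimately show ?thesis
    by (simp add: atLeastAtMostSuc_conv conj_commute)
qed

lemma prob_crp_walk_continuation:
  fixes l :: "nat \<Rightarrow> nat" and w :: "nat \<Rightarrow> counts"
  assumes l: "l 0 = 0" "\<forall>i<Suc p. l i \<le> l (Suc i)" and "w 0 = x"
    and xs: "xs \<in> set_pmf (crp_walk \<theta> x (l p))"
  shows "measure_pmf.prob (crp_walk \<theta> (last xs) (l (Suc p) - l p))
           ((\<lambda>ys. xs @ tl ys) -` {zs. \<forall>i\<in>{1..Suc p}. zs ! l i = w i})
       = indicator {zs. \<forall>i\<in>{1..p}. zs ! l i = w i} xs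
         * pmf (crp_kernel \<theta> (w p) (l (Suc p) - l p)) (w (Suc p))"
proof -
  define k where "k = l (Suc p) - l p"
  define E where "E = {zs. \<forall>i\<in>{1..p}. zs ! l i = w i}"
  have len: "length xs = Suc (l p)" and "xs ! 0 = x"
    using set_pmf_crp_walk[OF xs] by auto
  have last_xs: "last xs = w p" if "xs \<in> E"
    using that last_eq_nth_if_length[OF len] \<open>xs ! 0 = x\<close> l(1) \<open>w 0 = x\<close>
    by (cases "p = 0") (auto simp: E_def)
  have "(\<forall>i\<in>{1..Suc p}. (xs @ tl ys) ! l i = w i) \<longleftrightarrow> xs \<in> E \<and> last ys = w (Suc p)"
    if "ys \<in> set_pmf (crp_walk \<theta> (last xs) k)" for ys
    unfolding E_def mem_Collect_eq using l(2) len set_pmf_crp_walk[OF that]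
    by (intro nth_append_tl_visits_iff) (simp_all add: k_def)
  then have "measure_pmf.prob (crp_walk \<theta> (last xs) k)
      ((\<lambda>ys. xs @ tl ys) -` {zs. \<forall>i\<in>{1..Suc p}. zs ! l i = w i})
      = measure_pmf.prob (crp_walk \<theta> (last xs) k) {ys. xs \<in> E \<and> last ys = w (Suc p)}"
    by (intro measure_eq_AE) (auto simp: AE_measure_pmf_iff)
  also have "\<dots> = indicator E xs * pmf (crp_kernel \<theta> (w p) k) (w (Suc p))"
    using last_xs by (cases "xs \<in> E") (simp_all add: crp_kernel_def pmf_map vimage_def)
  finally show ?thesis
    by (simp add: E_def k_def)
qed

lemma prob_crp_walk_visits:
  fixes l :: "nat \<Rightarrow> nat" and w :: "nat \<Rightarrow> counts"
  assumes "l 0 = 0" "\<forall>i<p. l i \<le> l (Suc i)" "w 0 = x"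
  shows "measure_pmf.prob (crp_walk \<theta> x (l p)) {xs. \<forall>i\<in>{1..p}. xs ! l i = w i}
       = (\<Prod>i\<in>{1..p}. pmf (crp_kernel \<theta> (w (i - 1)) (l i - l (i - 1))) (w i))"
  using assms(2)
proof (induction p)
  case 0
  then show ?case by simp
next
  case (Suc p)
  define k where "k = l (Suc p) - l p"
  define E where "E = {xs. \<forall>i\<in>{1..p}. xs ! l i = w i}"
  define c where "c = pmf (crp_kernel \<theta> (w p) k) (w (Suc p))"
  have l_Suc: "l (Suc p) = l p + k"
    using Suc.prems by (simp add: k_def)
  have "measure_pmf.prob (crp_walk \<theta> x (l (Suc p))) {xs. \<forall>i\<in>{1..Suc p}. xs ! l i = w i}
      = (\<integral>xs. measure_pmf.prob (crp_walk \<theta> (last xs) k)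
            ((\<lambda>ys. xs @ tl ys) -` {zs. \<forall>i\<in>{1..Suc p}. zs ! l i = w i})
          \<partial>measure_pmf (crp_walk \<theta> x (l p)))"
    unfolding l_Suc crp_walk_add by (simp add: measure_pmf_prob_bind)
  also have "\<dots> = (\<integral>xs. indicator E xs * c \<partial>measure_pmf (crp_walk \<theta> x (l p)))"
    using prob_crp_walk_continuation[where l = l and p = p and w = w, OF assms(1) Suc.prems assms(3)]
    by (intro integral_cong_AE) (simp_all add: AE_measure_pmf_iff E_def c_def k_def)
  also have "\<dots> = measure_pmf.prob (crp_walk \<theta> x (l p)) E * c"
    by simp
  finally show ?case
    using Suc by (simp add: E_def c_def k_def prod.cl_ivl_Suc)
qed

section \<open>The total population\<close>

(* Transition function of the pure birth process with rate theta + n in state n: a negative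
   binomial law. *)
definition pop_transition :: "real \<Rightarrow> real \<Rightarrow> nat \<Rightarrow> nat \<Rightarrow> real" where
  "pop_transition \<theta> t a b =
     (if a \<le> b then pochhammer (\<theta> + real a) (b - a) / fact (b - a)
        * exp (- (\<theta> + real a) * t) * (1 - exp (- t)) ^ (b - a) else 0)"

lemma pop_transition_0: "pop_transition \<theta> 0 a b = (if a = b then 1 else 0)"
  by (auto simp: pop_transition_def)

lemma pop_transition_pos: "0 < \<theta> \<Longrightarrow> 0 < t \<Longrightarrow> a \<le> b \<Longrightarrow> 0 < pop_transition \<theta> t a b"
  by (auto simp: pop_transition_def intro!: mult_pos_pos divide_pos_pos pochhammer_pos)

lemma pop_transition_forward_diagonal:
  "((\<lambda>s. pop_transition \<theta> s a a) has_real_derivative - ((\<theta> + real a) * pop_transition \<theta> t a a)) (at t)"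
proof -
  have "((\<lambda>s. exp (- (\<theta> + real a) * s)) has_real_derivative
      exp (- (\<theta> + real a) * t) * - (\<theta> + real a)) (at t)"
    by (rule DERIV_fun_exp[OF DERIV_cmult_Id])
  moreover have "(\<lambda>s. pop_transition \<theta> s a a) = (\<lambda>s. exp (- (\<theta> + real a) * s))"
    by (simp add: pop_transition_def)
  moreover have "exp (- (\<theta> + real a) * t) * - (\<theta> + real a) = - ((\<theta> + real a) * pop_transition \<theta> t a a)"
    by (simp add: pop_transition_def algebra_simps)
  ultimately show ?thesis
    by (simp only:)
qed

lemma pop_transition_forward_above:
  assumes "a < b"
  shows "((\<lambda>s. pop_transition \<theta> s a b) has_real_derivative
     (\<theta> + real b - 1) * pop_transition \<theta> t a (b - 1) - (\<theta> + real b) * pop_transition \<theta> t a b) (at t)"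
proof -
  obtain m where b: "b = Suc (a + m)"
    using less_imp_Suc_add[OF assms] by blast
  define c c' where "c = pochhammer (\<theta> + real a) (Suc m) / fact (Suc m)"
    and "c' = pochhammer (\<theta> + real a) m / fact m"
  define E w where "E = exp (- (\<theta> + real a) * t)" and "w = 1 - exp (- t)"
  have closed_form: "(\<lambda>s. pop_transition \<theta> s a b)
      = (\<lambda>s. c * exp (- (\<theta> + real a) * s) * (1 - exp (- s)) ^ Suc m)"
    by (simp add: b pop_transition_def c_def)
  have P: "pop_transition \<theta> t a (b - 1) = c' * E * w ^ m" "pop_transition \<theta> t a b = c * E * w ^ Suc m"
    by (simp_all add: b pop_transition_def c_def c'_def E_def w_def)
  have c_c': "c * real (Suc m) = c' * (\<theta> + real a + real m)"
    by (simp add: c_def c'_def pochhammer_Suc field_simps del: of_nat_Suc)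
  have exp_w: "exp (- t) = 1 - w"
    by (simp add: w_def)
  have "c * (E * - (\<theta> + real a)) * w ^ Suc m + c * E * (real (Suc m) * w ^ m * exp (- t))
      = (c * real (Suc m)) * E * w ^ m - (\<theta> + real a + real m + 1) * (c * E * w ^ Suc m)"
    unfolding exp_w by (simp add: algebra_simps)
  also have "\<dots> = (\<theta> + real b - 1) * pop_transition \<theta> t a (b - 1) - (\<theta> + real b) * pop_transition \<theta> t a b"
    unfolding c_c' P by (simp add: b algebra_simps)
  finally have rhs: "(\<theta> + real b - 1) * pop_transition \<theta> t a (b - 1) - (\<theta> + real b) * pop_transition \<theta> t a b
      = c * (E * - (\<theta> + real a)) * w ^ Suc m + c * E * (real (Suc m) * w ^ m * exp (- t))" ..
  show ?thesis
    unfolding rhs closed_form E_def w_def by (rule derivative_eq_intros refl)+ simp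
qed

lemma pop_transition_forward:
  "((\<lambda>s. pop_transition \<theta> s a b) has_real_derivative
     (if a < b then (\<theta> + real b - 1) * pop_transition \<theta> t a (b - 1) else 0)
       - (\<theta> + real b) * pop_transition \<theta> t a b) (at t)"
proof -
  consider "a < b" | "a = b" | "b < a"
    by linarith
  then show ?thesis
  proof cases
    case 1
    then show ?thesis
      using pop_transition_forward_above[OF 1, of \<theta> t] by simp
  next
    case 2
    then show ?thesis
      using pop_transition_forward_diagonal[of \<theta> b t] by simp
  next
    case 3
    then show ?thesis
      by (simp add: pop_transition_def)
  qed
qed

lemma pop_transition_prod_pos:
  assumes "0 < \<theta>" "\<forall>i<p. t i < t (Suc i)" "\<forall>i<p. l i \<le> l (Suc i)"
  shows "0 < (\<Prod>i\<in>{1..p}. pop_transition \<theta> (t i - t (i - 1)) (l (i - 1)) (l i))"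
proof -
  have "t (i - 1) < t i" "l (i - 1) \<le> l i" if "i \<in> {1..p}" for i
    using that assms(2)[rule_format, of "i - 1"] assms(3)[rule_format, of "i - 1"] by auto
  then show ?thesis
    using assms(1) by (intro prod_pos pop_transition_pos) auto
qed

section \<open>The transition function of the Yule process with immigration\<close>

definition yim_kernel :: "real \<Rightarrow> real \<Rightarrow> counts \<Rightarrow> counts \<Rightarrow> real" where
  "yim_kernel \<theta> t x y =
     pmf (crp_kernel \<theta> x (popsize y - popsize x)) y * pop_transition \<theta> t (popsize x) (popsize y)"

lemma yim_kernel_0: "yim_kernel \<theta> 0 x y = (if x = y then 1 else 0)"
  by (auto simp: yim_kernel_def pop_transition_0 crp_kernel_0)

lemma infsum_yim_rate_eq_sum_level:
  "(\<Sum>\<^sub>\<infinity>z\<in>count_states - {y}. f z * yim_rate \<theta> z y)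
     = (\<Sum>z\<in>level (popsize y - 1). f z * yim_rate \<theta> z y)"
proof -
  have rate_0: "yim_rate \<theta> z y = 0" if "z \<in> count_states" "popsize y \<noteq> Suc (popsize z)" for z
    using that popsize_yim_rate_nonzero by blast
  have "(\<Sum>\<^sub>\<infinity>z\<in>count_states - {y}. f z * yim_rate \<theta> z y)
      = (\<Sum>\<^sub>\<infinity>z\<in>level (popsize y - 1). f z * yim_rate \<theta> z y)"
  proof (rule infsum_cong_neutral)
    fix z assume z: "z \<in> count_states - {y} - level (popsize y - 1)"
    then have "popsize y \<noteq> Suc (popsize z)"
      by (auto simp: level_def)
    then show "f z * yim_rate \<theta> z y = 0"
      using rate_0[of z] z by simp
  next
    fix z assume "z \<in> level (popsize y - 1) - (count_states - {y})"
    then have "z = y" "y \<in> count_states"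
      by (auto simp: level_def)
    then show "f z * yim_rate \<theta> z y = 0"
      using rate_0[of y] by simp
  qed simp
  then show ?thesis
    using finite_level by simp
qed

lemma sum_crp_kernel_yim_rate:
  assumes "0 \<le> \<theta>" "x \<in> count_states" "popsize y = popsize x + Suc k"
  shows "(\<Sum>z\<in>level (popsize y - 1). pmf (crp_kernel \<theta> x k) z * yim_rate \<theta> z y)
       = (\<theta> + real (popsize y - 1)) * pmf (crp_kernel \<theta> x (Suc k)) y"
proof -
  have "pmf (crp_kernel \<theta> x (Suc k)) y = (\<integral>z. pmf (crp_step \<theta> z) y \<partial>crp_kernel \<theta> x k)"
    by (simp add: crp_kernel_Suc pmf_bind)
  also have "\<dots> = (\<Sum>z\<in>level (popsize y - 1). pmf (crp_step \<theta> z) y * pmf (crp_kernel \<theta> x k) z)"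
    using set_pmf_crp_kernel[OF assms(2), of \<theta> k] assms(3)
    by (intro integral_measure_pmf_real) (auto simp: finite_level)
  moreover have "(\<Sum>z\<in>level (popsize y - 1). pmf (crp_kernel \<theta> x k) z * yim_rate \<theta> z y)
      = (\<Sum>z\<in>level (popsize y - 1).
           (\<theta> + real (popsize y - 1)) * (pmf (crp_step \<theta> z) y * pmf (crp_kernel \<theta> x k) z))"
  proof (rule sum.cong)
    fix z assume "z \<in> level (popsize y - 1)"
    then show "pmf (crp_kernel \<theta> x k) z * yim_rate \<theta> z y
        = (\<theta> + real (popsize y - 1)) * (pmf (crp_step \<theta> z) y * pmf (crp_kernel \<theta> x k) z)"
      using pmf_crp_step[OF assms(1), of z y] by (simp add: level_def)
  qed simp
  ultimately show ?thesis
    by (simp add: sum_distrib_left)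
qed

lemma infsum_yim_kernel_yim_rate:
  fixes y :: counts
  assumes "0 \<le> \<theta>" "x \<in> count_states"
  defines "a \<equiv> popsize x" and "b \<equiv> popsize y"
  shows "(\<Sum>\<^sub>\<infinity>z\<in>count_states - {y}. yim_kernel \<theta> t x z * yim_rate \<theta> z y)
      = pmf (crp_kernel \<theta> x (b - a)) y
          * (if a < b then (\<theta> + real b - 1) * pop_transition \<theta> t a (b - 1) else 0)"
proof (cases "a < b")
  case True
  define k where "k = b - 1 - a"
  have k: "b = a + Suc k" "b - a = Suc k"
    using True by (auto simp: k_def)
  have "(\<Sum>\<^sub>\<infinity>z\<in>count_states - {y}. yim_kernel \<theta> t x z * yim_rate \<theta> z y)
      = (\<Sum>z\<in>level (b - 1). pop_transition \<theta> t a (b - 1) * (pmf (crp_kernel \<theta> x k) z * yim_rate \<theta> z y))"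
    unfolding infsum_yim_rate_eq_sum_level b_def[symmetric]
    by (intro sum.cong) (auto simp: yim_kernel_def level_def a_def k_def)
  also have "\<dots> = pop_transition \<theta> t a (b - 1) * ((\<theta> + real (b - 1)) * pmf (crp_kernel \<theta> x (Suc k)) y)"
    using sum_crp_kernel_yim_rate[OF assms(1,2), of y k] k by (simp add: a_def b_def flip: sum_distrib_left)
  finally show ?thesis
    using True k by (simp add: of_nat_diff)
next
  case False
  have "yim_kernel \<theta> t x z * yim_rate \<theta> z y = 0" if "z \<in> level (b - 1)" for z
  proof (cases "yim_rate \<theta> z y = 0")
    case False
    then have "popsize z < a"
      using that popsize_yim_rate_nonzero[of z \<theta> y] \<open>\<not> a < b\<close> by (auto simp: level_def b_def)
    then show ?thesis
      by (simp add: yim_kernel_def pop_transition_def a_def)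
  qed simp
  then show ?thesis
    unfolding infsum_yim_rate_eq_sum_level b_def[symmetric] using False by (simp add: sum.neutral)
qed

lemma yim_kernel_forward:
  assumes "0 \<le> \<theta>" "x \<in> count_states"
  shows "((\<lambda>s. yim_kernel \<theta> s x y) has_real_derivative
     (\<Sum>\<^sub>\<infinity>z\<in>count_states - {y}. yim_kernel \<theta> t x z * yim_rate \<theta> z y)
       - yim_exit \<theta> y * yim_kernel \<theta> t x y) (at t)"
proof -
  define a b where "a = popsize x" and "b = popsize y"
  have "((\<lambda>s. yim_kernel \<theta> s x y) has_real_derivative pmf (crp_kernel \<theta> x (b - a)) y
      * ((if a < b then (\<theta> + real b - 1) * pop_transition \<theta> t a (b - 1) else 0)
         - (\<theta> + real b) * pop_transition \<theta> t a b)) (at t)"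
    unfolding yim_kernel_def a_def b_def by (intro DERIV_cmult pop_transition_forward)
  moreover have "pmf (crp_kernel \<theta> x (b - a)) y
      * ((if a < b then (\<theta> + real b - 1) * pop_transition \<theta> t a (b - 1) else 0)
         - (\<theta> + real b) * pop_transition \<theta> t a b)
    = (\<Sum>\<^sub>\<infinity>z\<in>count_states - {y}. yim_kernel \<theta> t x z * yim_rate \<theta> z y)
       - yim_exit \<theta> y * yim_kernel \<theta> t x y"
    unfolding infsum_yim_kernel_yim_rate[OF assms] a_def b_def
    by (simp add: yim_exit_def yim_kernel_def algebra_simps)
  ultimately show ?thesis
    by simp
qed

lemma yim_transition_eq_yim_kernel:
  assumes p: "yim_transition \<theta> p" and "0 \<le> \<theta>" and x: "x \<in> count_states"
  shows "y \<in> count_states \<Longrightarrow> 0 \<le> t \<Longrightarrow> p t x y = yim_kernel \<theta> t x y"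
proof (induction "popsize y" arbitrary: y t rule: less_induct)
  case less
  (* Both functions have the same inflow into y by induction, so their difference d solves
     d' = - q d with d 0 = 0. *)
  define q where "q = yim_exit \<theta> y"
  define inflow where "inflow f (s::real) = (\<Sum>\<^sub>\<infinity>z\<in>count_states - {y}. f s x z * yim_rate \<theta> z y)" for f s
  have same_inflow: "inflow p s = inflow (yim_kernel \<theta>) s" if "0 \<le> s" for s
    unfolding inflow_def
  proof (rule infsum_cong)
    fix z assume "z \<in> count_states - {y}"
    then show "p s x z * yim_rate \<theta> z y = yim_kernel \<theta> s x z * yim_rate \<theta> z y"
      using popsize_yim_rate_nonzero[of z \<theta> y] less.hyps[of z s] that by fastforce
  qed
  have d0: "((\<lambda>s. (p s x y - yim_kernel \<theta> s x y) * exp (q * s)) has_real_derivative 0)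
      (at s within {0..})" if "0 \<le> s" for s
  proof -
    have dp: "((\<lambda>s. p s x y) has_real_derivative inflow p s - q * p s x y) (at s within {0..})"
      using p x less.prems that unfolding yim_transition_def inflow_def q_def by blast
    have dk: "((\<lambda>s. yim_kernel \<theta> s x y) has_real_derivative
        inflow (yim_kernel \<theta>) s - q * yim_kernel \<theta> s x y) (at s within {0..})"
      unfolding inflow_def q_def
      by (rule has_field_derivative_at_within[OF yim_kernel_forward[OF assms(2) x]])
    have "((\<lambda>s. exp (q * s)) has_real_derivative exp (q * s) * q) (at s within {0..})"
      by (auto intro!: derivative_eq_intros)
    from DERIV_mult[OF DERIV_diff[OF dp dk] this] show ?thesis
      using same_inflow[OF that] by (simp add: algebra_simps)
  qed
  then obtain c where c: "\<forall>s\<in>{0..}. (p s x y - yim_kernel \<theta> s x y) * exp (q * s) = c"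
    using has_field_derivative_zero_constant[OF convex_real_interval(1) d0] by auto
  have "c = 0"
    using c[rule_format, of 0] p x less.prems(1) by (simp add: yim_transition_def yim_kernel_0)
  then show ?case
    using c less.prems(2) by simp
qed

section \<open>Finite-dimensional distributions\<close>

lemma yule_immigration_fdd_transition:
  assumes C: "yule_immigration M \<theta> C"
    and t: "t 0 = 0" "\<forall>i<p. t i < t (Suc i)"
    and w: "w 0 = (\<lambda>_. 0)" "\<forall>i\<in>{1..p}. w i \<in> count_states"
  obtains tr where "yim_transition \<theta> tr"
    and "measure M {\<omega>\<in>space M. \<forall>i\<in>{1..p}. C (t i) \<omega> = w i}
       = (\<Prod>i\<in>{1..p}. tr (t i - t (i - 1)) (w (i - 1)) (w i))"
proof -
  obtain tr where tr: "yim_transition \<theta> tr"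
    and fdd: "\<And>ts xs. length ts = length xs \<Longrightarrow> sorted_wrt (<) (0 # ts) \<Longrightarrow>
        set xs \<subseteq> count_states \<Longrightarrow>
        measure M {\<omega>\<in>space M. \<forall>i<length ts. C (ts ! i) \<omega> = xs ! i}
          = (\<Prod>i<length ts. tr (ts ! i - (0 # ts) ! i) (((\<lambda>_. 0) # xs) ! i) (xs ! i))"
    using C unfolding yule_immigration_def by blast
  define ts where "ts = map t [1..<Suc p]"
  define ws where "ws = map w [1..<Suc p]"
  have cons: "0 # ts = map t [0..<Suc p]" "(\<lambda>_. 0) # ws = map w [0..<Suc p]"
    using t(1) w(1) by (simp_all add: ts_def ws_def upt_conv_Cons del: upt_Suc)
  have len: "length ts = p" "length ws = p"
    by (simp_all add: ts_def ws_def)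
  have nth: "ts ! i = t (Suc i)" "ws ! i = w (Suc i)" "(0 # ts) ! i = t i" "((\<lambda>_. 0) # ws) ! i = w i"
    if "i < p" for i
    using that unfolding cons by (simp_all add: ts_def ws_def del: upt_Suc)
  have "sorted_wrt (<) (0 # ts)"
    unfolding cons sorted_wrt_iff_nth_less
    by (auto simp del: upt_Suc intro!: lift_Suc_mono_less_atMost[OF t(2)])
  moreover have "set ws \<subseteq> count_states"
    using w(2) by (auto simp: ws_def)
  moreover have "{\<omega>\<in>space M. \<forall>i\<in>{1..p}. C (t i) \<omega> = w i}
      = {\<omega>\<in>space M. \<forall>i<length ts. C (ts ! i) \<omega> = ws ! i}"
    unfolding image_Suc_lessThan[symmetric] by (auto simp: len nth)
  ultimately have "measure M {\<omega>\<in>space M. \<forall>i\<in>{1..p}. C (t i) \<omega> = w i}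
      = (\<Prod>i<p. tr (ts ! i - (0 # ts) ! i) (((\<lambda>_. 0) # ws) ! i) (ws ! i))"
    using fdd[of ts ws] len by simp
  also have "\<dots> = (\<Prod>i\<in>{1..p}. tr (t i - t (i - 1)) (w (i - 1)) (w i))"
    by (simp add: nth prod.atLeast1_atMost_eq)
  finally show ?thesis
    using tr that by blast
qed

lemma yule_immigration_fdd:
  assumes C: "yule_immigration M \<theta> C" and "0 \<le> \<theta>"
    and t: "t 0 = 0" "\<forall>i<p. t i < t (Suc i)"
    and w: "w 0 = (\<lambda>_. 0)" "\<forall>i\<in>{1..p}. w i \<in> count_states"
  shows "measure M {\<omega>\<in>space M. \<forall>i\<in>{1..p}. C (t i) \<omega> = w i}
       = (\<Prod>i\<in>{1..p}. yim_kernel \<theta> (t i - t (i - 1)) (w (i - 1)) (w i))"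
proof -
  obtain tr where tr: "yim_transition \<theta> tr"
    and fdd: "measure M {\<omega>\<in>space M. \<forall>i\<in>{1..p}. C (t i) \<omega> = w i}
       = (\<Prod>i\<in>{1..p}. tr (t i - t (i - 1)) (w (i - 1)) (w i))"
    using yule_immigration_fdd_transition[OF C t w] .
  have "tr (t i - t (i - 1)) (w (i - 1)) (w i) = yim_kernel \<theta> (t i - t (i - 1)) (w (i - 1)) (w i)"
    if "i \<in> {1..p}" for i
  proof (rule yim_transition_eq_yim_kernel[OF tr \<open>0 \<le> \<theta>\<close>])
    have "w j \<in> count_states" if "j \<le> p" for j
      using w that by (cases "j = 0") (auto simp: count_states_def)
    then show "w (i - 1) \<in> count_states" "w i \<in> count_states"
      using that by auto
    show "0 \<le> t i - t (i - 1)"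
      using lift_Suc_mono_less_atMost[OF t(2), of "i - 1" i] that by simp
  qed
  then show ?thesis
    unfolding fdd by (rule prod.cong[OF refl])
qed

lemma yule_immigration_fdd_eq_crp:
  assumes C: "yule_immigration M \<theta> C" "0 \<le> \<theta>"
    and t: "t 0 = 0" "\<forall>i<p. t i < t (Suc i)"
    and l: "l 0 = 0" "\<forall>i<p. l i \<le> l (Suc i)"
    and w: "w 0 = (\<lambda>_. 0)" "\<forall>i\<in>{1..p}. w i \<in> level (l i)"
  shows "measure M {\<omega>\<in>space M. \<forall>i\<in>{1..p}. C (t i) \<omega> = w i}
       = (\<Prod>i\<in>{1..p}. pop_transition \<theta> (t i - t (i - 1)) (l (i - 1)) (l i))
         * measure_pmf.prob (crp_path \<theta> (l p)) {xs. \<forall>i\<in>{1..p}. xs ! l i = w i}"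
proof -
  have popsize_w: "popsize (w i) = l i" if "i \<le> p" for i
    using w l(1) that by (cases "i = 0") (auto simp: level_def popsize_def)
  have "measure M {\<omega>\<in>space M. \<forall>i\<in>{1..p}. C (t i) \<omega> = w i}
      = (\<Prod>i\<in>{1..p}. yim_kernel \<theta> (t i - t (i - 1)) (w (i - 1)) (w i))"
    using w by (intro yule_immigration_fdd[OF C t]) (auto simp: level_def)
  also have "\<dots> = (\<Prod>i\<in>{1..p}. pmf (crp_kernel \<theta> (w (i - 1)) (l i - l (i - 1))) (w i)
      * pop_transition \<theta> (t i - t (i - 1)) (l (i - 1)) (l i))"
    by (intro prod.cong) (auto simp: yim_kernel_def popsize_w)
  finally show ?thesis
    unfolding crp_path_eq_crp_walk prob_crp_walk_visits[where l = l and p = p and w = w, OF l w(1)]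
    by (simp add: prod.distrib mult.commute)
qed

lemma yule_immigration_in_count_states:
  "yule_immigration M \<theta> C \<Longrightarrow> 0 \<le> s \<Longrightarrow> \<omega> \<in> space M \<Longrightarrow> C s \<omega> \<in> count_states"
  unfolding yule_immigration_def by blast

lemma sets_yule_immigration_fdd:
  assumes "yule_immigration M \<theta> C" "finite I" "\<forall>i\<in>I. 0 \<le> s i"
  shows "{\<omega>\<in>space M. \<forall>i\<in>I. C (s i) \<omega> = w i} \<in> sets M"
proof (rule sets.sets_Collect_finite_All[OF _ assms(2)])
  fix i assume "i \<in> I"
  then have "C (s i) \<in> measurable M (count_space UNIV)"
    using assms(1,3) by (simp add: yule_immigration_def)
  from measurable_sets[OF this, of "{w i}"]
  show "{\<omega>\<in>space M. C (s i) \<omega> = w i} \<in> sets M"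
    by (simp add: vimage_def Int_def conj_commute)
qed

lemma finite_PiE_level: "finite {w \<in> (\<Pi>\<^sub>E i\<in>I. level (l i)). P w}" if "finite I"
  by (rule finite_subset[OF _ finite_PiE[OF that finite_level]]) auto

lemma measure_yule_immigration_eq_sum:
  assumes C: "yule_immigration M \<theta> C" and t: "t 0 = 0" "\<forall>i<p. t i < t (Suc i)"
  shows "measure M {\<omega>\<in>space M. (\<forall>i\<in>{1..p}. popsize (C (t i) \<omega>) = l i)
                                   \<and> P (\<lambda>i\<in>{1..p}. C (t i) \<omega>)}
       = (\<Sum>w\<in>{w \<in> (\<Pi>\<^sub>E i\<in>{1..p}. level (l i)). P w}.
            measure M {\<omega>\<in>space M. \<forall>i\<in>{1..p}. C (t i) \<omega> = w i})"
proof -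
  interpret prob_space M
    using C by (simp add: yule_immigration_def)
  define F where "F \<omega> = (\<lambda>i\<in>{1..p}. C (t i) \<omega>)" for \<omega>
  define W where "W = {w \<in> (\<Pi>\<^sub>E i\<in>{1..p}. level (l i)). P w}"
  have "\<forall>i<p. t i \<le> t (Suc i)"
    using t(2) by (simp add: less_imp_le)
  then have t_nonneg: "0 \<le> t i" if "i \<le> p" for i
    using lift_Suc_mono_le_atMost[of p t 0 i] t(1) that by simp
  have fibre: "{\<omega>\<in>space M. F \<omega> = w} = {\<omega>\<in>space M. \<forall>i\<in>{1..p}. C (t i) \<omega> = w i}" if "w \<in> W" for w
    using that by (auto simp: F_def W_def PiE_iff restrict_eq_iff)
  have "{\<omega>\<in>space M. (\<forall>i\<in>{1..p}. popsize (C (t i) \<omega>) = l i) \<and> P (F \<omega>)}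
      = {\<omega>\<in>space M. F \<omega> \<in> W}"
    using yule_immigration_in_count_states[OF C t_nonneg]
    by (auto simp: F_def W_def level_def restrict_PiE_iff)
  also have "measure M \<dots> = (\<Sum>w\<in>W. measure M {\<omega>\<in>space M. F \<omega> = w})"
    using t_nonneg unfolding W_def
    by (intro measure_preimage_eq_sum finite_PiE_level)
      (simp_all add: fibre[unfolded W_def] sets_yule_immigration_fdd[OF C])
  also have "\<dots> = (\<Sum>w\<in>W. measure M {\<omega>\<in>space M. \<forall>i\<in>{1..p}. C (t i) \<omega> = w i})"
    by (rule sum.cong) (simp_all add: fibre)
  finally show ?thesis
    by (simp only: F_def W_def)
qed

lemma prob_crp_path_eq_sum:
  assumes l: "\<forall>i<p. l i \<le> l (Suc i)"
  shows "measure_pmf.prob (crp_path \<theta> (l p)) {xs. P (\<lambda>i\<in>{1..p}. xs ! l i)}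
       = (\<Sum>w\<in>{w \<in> (\<Pi>\<^sub>E i\<in>{1..p}. level (l i)). P w}.
            measure_pmf.prob (crp_path \<theta> (l p)) {xs. \<forall>i\<in>{1..p}. xs ! l i = w i})"
proof -
  let ?crp = "crp_path \<theta> (l p)"
  define G where "G xs = (\<lambda>i\<in>{1..p}. xs ! l i)" for xs :: "counts list"
  define W where "W = {w \<in> (\<Pi>\<^sub>E i\<in>{1..p}. level (l i)). P w}"
  have "xs ! l i \<in> level (l i)" if "xs \<in> set_pmf ?crp" "i \<le> p" for xs i
    using crp_path_in_level[OF that(1) lift_Suc_mono_le_atMost[OF l that(2) order.refl]] .
  then have "measure_pmf.prob ?crp {xs. P (G xs)} = measure_pmf.prob ?crp {xs. G xs \<in> W}"
    by (intro measure_eq_AE) (auto simp: AE_measure_pmf_iff W_def G_def)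
  also have "\<dots> = (\<Sum>w\<in>W. measure_pmf.prob ?crp {xs. G xs = w})"
    using measure_pmf.measure_preimage_eq_sum[of W ?crp G] finite_PiE_level[of "{1..p}" l P]
    by (simp add: W_def)
  also have "\<dots> = (\<Sum>w\<in>W. measure_pmf.prob ?crp {xs. \<forall>i\<in>{1..p}. xs ! l i = w i})"
    by (intro sum.cong) (auto simp: W_def G_def PiE_iff restrict_eq_iff)
  finally show ?thesis
    by (simp only: G_def W_def)
qed

lemma yule_immigration_factorization:
  assumes C: "yule_immigration M \<theta> C" "0 \<le> \<theta>"
    and t: "t 0 = 0" "\<forall>i<p. t i < t (Suc i)"
    and l: "l 0 = 0" "\<forall>i<p. l i \<le> l (Suc i)"
  shows "measure M {\<omega>\<in>space M. (\<forall>i\<in>{1..p}. popsize (C (t i) \<omega>) = l i)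
                                   \<and> P (\<lambda>i\<in>{1..p}. C (t i) \<omega>)}
       = (\<Prod>i\<in>{1..p}. pop_transition \<theta> (t i - t (i - 1)) (l (i - 1)) (l i))
         * measure_pmf.prob (crp_path \<theta> (l p)) {xs. P (\<lambda>i\<in>{1..p}. xs ! l i)}"
proof -
  have "measure M {\<omega>\<in>space M. \<forall>i\<in>{1..p}. C (t i) \<omega> = w i}
      = (\<Prod>i\<in>{1..p}. pop_transition \<theta> (t i - t (i - 1)) (l (i - 1)) (l i))
        * measure_pmf.prob (crp_path \<theta> (l p)) {xs. \<forall>i\<in>{1..p}. xs ! l i = w i}"
    if "w \<in> (\<Pi>\<^sub>E i\<in>{1..p}. level (l i))" for w
    using yule_immigration_fdd_eq_crp[OF C t l, of "w(0 := \<lambda>_. 0)"] that by (simp add: PiE_iff)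
  then show ?thesis
    unfolding measure_yule_immigration_eq_sum[OF C(1) t] prob_crp_path_eq_sum[OF l(2)]
    by (simp add: sum_distrib_left)
qed

theorem theorem3:
  fixes M :: "'a measure" and \<theta> :: real and C :: "real \<Rightarrow> 'a \<Rightarrow> counts"
    and p :: nat and t :: "nat \<Rightarrow> real" and l :: "nat \<Rightarrow> nat" and u :: "nat \<Rightarrow> nat \<Rightarrow> nat"
  assumes "\<theta> > 0"
    and "yule_immigration M \<theta> C"
    and "p \<ge> 1"
    and "0 < t 1" and "\<forall>i. 1 \<le> i \<and> i < p \<longrightarrow> t i < t (Suc i)"
    and "\<forall>i. 1 \<le> i \<and> i < p \<longrightarrow> l i \<le> l (Suc i)"
  shows "cond_prob M
           {\<omega>\<in>space M. \<forall>i\<in>{1..p}. \<forall>j\<ge>1. C (t i) \<omega> j = u i j}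
           {\<omega>\<in>space M. \<forall>i\<in>{1..p}. popsize (C (t i) \<omega>) = l i}
         = measure_pmf.prob (crp_path \<theta> (l p))
             {xs. \<forall>i\<in>{1..p}. \<forall>j\<ge>1. (xs ! l i) j = u i j}"
proof -
  (* Nothing is assumed about t 0 and l 0; index 0 stands for time 0 and the empty population. *)
  define t' l' where "t' = t(0 := 0)" and "l' = l(0 := 0)"
  have t': "t' 0 = 0" "\<forall>i<p. t' i < t' (Suc i)"
    using assms(4,5) by (auto simp: t'_def)
  have l': "l' 0 = 0" "\<forall>i<p. l' i \<le> l' (Suc i)"
    using assms(6) by (auto simp: l'_def)
  define pop where "pop = (\<Prod>i\<in>{1..p}. pop_transition \<theta> (t' i - t' (i - 1)) (l' (i - 1)) (l' i))"
  have "0 < pop"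
    unfolding pop_def using assms(1) t'(2) l'(2) by (rule pop_transition_prod_pos)
  have factor: "measure M {\<omega>\<in>space M. (\<forall>i\<in>{1..p}. popsize (C (t i) \<omega>) = l i)
                                        \<and> P (\<lambda>i\<in>{1..p}. C (t i) \<omega>)}
      = pop * measure_pmf.prob (crp_path \<theta> (l p)) {xs. P (\<lambda>i\<in>{1..p}. xs ! l i)}" for P
    using yule_immigration_factorization[OF assms(2) _ t' l', of P] assms(1,3)
    by (simp add: pop_def t'_def l'_def cong: restrict_cong)
  have "{\<omega>\<in>space M. \<forall>i\<in>{1..p}. \<forall>j\<ge>1. C (t i) \<omega> j = u i j}
      \<inter> {\<omega>\<in>space M. \<forall>i\<in>{1..p}. popsize (C (t i) \<omega>) = l i}
      = {\<omega>\<in>space M. (\<forall>i\<in>{1..p}. popsize (C (t i) \<omega>) = l i)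
                       \<and> (\<forall>i\<in>{1..p}. \<forall>j\<ge>1. (\<lambda>i\<in>{1..p}. C (t i) \<omega>) i j = u i j)}"
    by auto
  then show ?thesis
    using factor[of "\<lambda>w. \<forall>i\<in>{1..p}. \<forall>j\<ge>1. w i j = u i j"] factor[of "\<lambda>_. True"] \<open>0 < pop\<close>
    unfolding cond_prob_def by simp
qed

end
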